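(* Consider $N$ users indexed by $\mathcal{U}=\{1,\dots,N\}$ with fixed channel power gains $h_1,\dots,h_N>0$, noise variance $\eta>0$, target throughputs $\theta_1,\dots,\theta_N>0$, and strategy sets $\mathcal{P}^i=[0,P_i^{max}]$ with $P_i^{max}>0$. For $\mathbf{P}\in\prod_i\mathcal{P}^i$ let $r_i(\mathbf{P})=\log_2\!\big(1+\frac{h_iP_i}{\eta+\sum_{j\neq i}h_jP_j}\big)$. Let $\mathcal{S}$ be the set of satisfaction equilibria, i.e. profiles $\mathbf{P}\in\prod_i\mathcal{P}^i$ with $r_i(\mathbf{P})\ge\theta_i$ for all $i$, and suppose $\mathcal{S}\neq\emptyset$. Then the efficient satisfaction equilibrium (a minimizer of $\sum_{i}P_i$ over $\mathcal{S}$) is unique, and it is the solution of the system $r_i(\mathbf{P})=\theta_i$ for all $i\in\mathcal{U}$.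
   Context: The system $r_i(\mathbf{P})=\theta_i$, $i\in\mathcal{U}$, is equivalent to the linear system $h_iP_i-(2^{\theta_i}-1)\sum_{j\neq i}h_jP_j=(2^{\theta_i}-1)\eta$, $i\in\mathcal{U}$. *)

theory Defs
  imports Complex_Main
begin

text \<open>Users are indexed by a finite type 'u (so N = CARD('u)).
  A power profile is a function P :: 'u \<Rightarrow> real.\<close>

definition rate :: "('u::finite \<Rightarrow> real) \<Rightarrow> real \<Rightarrow> 'u \<Rightarrow> ('u \<Rightarrow> real) \<Rightarrow> real" where
  "rate h \<eta> i P = log 2 (1 + h i * P i / (\<eta> + (\<Sum>j\<in>UNIV - {i}. h j * P j)))"

definition strategy_space :: "('u::finite \<Rightarrow> real) \<Rightarrow> ('u \<Rightarrow> real) set" where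
  "strategy_space Pmax = {P. \<forall>i. 0 \<le> P i \<and> P i \<le> Pmax i}"

definition satisfaction_equilibria ::
  "('u::finite \<Rightarrow> real) \<Rightarrow> real \<Rightarrow> ('u \<Rightarrow> real) \<Rightarrow> ('u \<Rightarrow> real) \<Rightarrow> ('u \<Rightarrow> real) set" where
  "satisfaction_equilibria h \<eta> \<theta> Pmax =
     {P \<in> strategy_space Pmax. \<forall>i. rate h \<eta> i P \<ge> \<theta> i}"

definition efficient_SE ::
  "('u::finite \<Rightarrow> real) \<Rightarrow> real \<Rightarrow> ('u \<Rightarrow> real) \<Rightarrow> ('u \<Rightarrow> real) \<Rightarrow> ('u \<Rightarrow> real) \<Rightarrow> bool" where
  "efficient_SE h \<eta> \<theta> Pmax P \<longleftrightarrow>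
     P \<in> satisfaction_equilibria h \<eta> \<theta> Pmax \<and>
     (\<forall>Q \<in> satisfaction_equilibria h \<eta> \<theta> Pmax. (\<Sum>i\<in>UNIV. P i) \<le> (\<Sum>i\<in>UNIV. Q i))"

end

theory Submission
  imports Defs
begin

text \<open>With total received power \<open>T(P) = \<eta> + \<Sum>\<^sub>j h\<^sub>j P\<^sub>j\<close> and the
  required share \<open>a\<^sub>i = 1 - 2 ^ (-\<theta>\<^sub>i)\<close>, the constraint \<open>r\<^sub>i(P) \<ge> \<theta>\<^sub>i\<close> is the linear constraint \<open>h\<^sub>i P\<^sub>i \<ge> a\<^sub>i T(P)\<close>.
  Summing these gives \<open>T(P) - \<eta> \<ge> (\<Sum>\<^sub>i a\<^sub>i) T(P)\<close>, so feasibility forces \<open>\<Sum>\<^sub>i a\<^sub>i < 1\<close> and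
  \<open>T(P) \<ge> T\<^sup>* = \<eta> / (1 - \<Sum>\<^sub>i a\<^sub>i)\<close> for every satisfaction equilibrium.  Hence every
  equilibrium dominates the profile \<open>P\<^sup>*\<^sub>i = a\<^sub>i T\<^sup>* / h\<^sub>i\<close> componentwise, and \<open>P\<^sup>*\<close> is itself an
  equilibrium meeting all constraints with equality.  So \<open>P\<^sup>*\<close> is the unique power minimiser,
  and it is the unique solution of \<open>r\<^sub>i(P) = \<theta>\<^sub>i\<close>, because equality in every constraint
  forces \<open>T(P) = \<eta> + (\<Sum>\<^sub>i a\<^sub>i) T(P)\<close>, i.e. \<open>T(P) = T\<^sup>*\<close>.\<close>

definition received_power :: "('u::finite \<Rightarrow> real) \<Rightarrow> real \<Rightarrow> ('u \<Rightarrow> real) \<Rightarrow> real" where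
  "received_power h \<eta> P = \<eta> + (\<Sum>j\<in>UNIV. h j * P j)"

definition required_share :: "real \<Rightarrow> real" where
  "required_share t = 1 - 2 powr - t"

definition min_power_profile ::
  "('u::finite \<Rightarrow> real) \<Rightarrow> real \<Rightarrow> ('u \<Rightarrow> real) \<Rightarrow> 'u \<Rightarrow> real" where
  "min_power_profile h \<eta> a i = a i * (\<eta> / (1 - (\<Sum>j\<in>UNIV. a j))) / h i"

lemma rate_eq_log_received_power:
  fixes h P :: "'u::finite \<Rightarrow> real" and i :: 'u
  assumes h: "\<And>j. h j > 0" and \<eta>: "\<eta> > 0" and P: "\<And>j. P j \<ge> 0"
  defines "D \<equiv> \<eta> + (\<Sum>j\<in>UNIV - {i}. h j * P j)"
  shows "D > 0" and "received_power h \<eta> P = h i * P i + D"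
    and "rate h \<eta> i P = log 2 (received_power h \<eta> P / D)"
proof -
  have "(\<Sum>j\<in>UNIV - {i}. h j * P j) \<ge> 0"
    using h P by (intro sum_nonneg) (simp add: less_imp_le)
  then show D0: "D > 0" unfolding D_def using \<eta> by linarith
  show T: "received_power h \<eta> P = h i * P i + D"
    unfolding received_power_def D_def by (simp add: sum.remove[of UNIV i])
  show "rate h \<eta> i P = log 2 (received_power h \<eta> P / D)"
    unfolding rate_def D_def[symmetric] T using D0 by (simp add: field_simps)
qed

lemma rate_threshold_iff:
  fixes h P :: "'u::finite \<Rightarrow> real"
  assumes h: "\<And>j. h j > 0" and \<eta>: "\<eta> > 0" and P: "\<And>j. P j \<ge> 0"
  shows "t \<le> rate h \<eta> i P \<longleftrightarrow> required_share t * received_power h \<eta> P \<le> h i * P i"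
    and "rate h \<eta> i P = t \<longleftrightarrow> h i * P i = required_share t * received_power h \<eta> P"
proof -
  define D where "D = \<eta> + (\<Sum>j\<in>UNIV - {i}. h j * P j)"
  define c where "c = (2::real) powr t"
  note R = rate_eq_log_received_power[where h=h and P=P and i=i, OF h \<eta> P, folded D_def]
  have c0: "c > 0" unfolding c_def by simp
  have TD0: "received_power h \<eta> P / D > 0"
    unfolding R(2) using R(1) h[of i] P[of i]
    by (intro divide_pos_pos add_nonneg_pos mult_nonneg_nonneg) (simp_all add: less_imp_le)
  have a: "required_share t = (c - 1) / c"
    unfolding required_share_def c_def powr_minus_divide by (simp add: field_simps)
  have "t \<le> rate h \<eta> i P \<longleftrightarrow> c \<le> received_power h \<eta> P / D"
    unfolding R(3) c_def using le_log_iff[of 2 _ t] TD0 by simp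
  also have "\<dots> \<longleftrightarrow> c * D \<le> h i * P i + D" using R(1,2) by (simp add: field_simps)
  also have "\<dots> \<longleftrightarrow> required_share t * received_power h \<eta> P \<le> h i * P i"
    unfolding a R(2) using c0 by (simp add: field_simps)
  finally show "t \<le> rate h \<eta> i P \<longleftrightarrow> required_share t * received_power h \<eta> P \<le> h i * P i" .
  have "rate h \<eta> i P = t \<longleftrightarrow> received_power h \<eta> P / D = c"
    unfolding R(3) c_def using TD0 by auto
  also have "\<dots> \<longleftrightarrow> c * D = h i * P i + D" using R(1,2) by (auto simp add: field_simps)
  also have "\<dots> \<longleftrightarrow> h i * P i = required_share t * received_power h \<eta> P"
    unfolding a R(2) using c0 by (auto simp add: field_simps)
  finally show "rate h \<eta> i P = t \<longleftrightarrow> h i * P i = required_share t * received_power h \<eta> P" .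
qed

lemma received_power_lower_bound:
  fixes h a P :: "'u::finite \<Rightarrow> real"
  assumes "\<And>i. a i * received_power h \<eta> P \<le> h i * P i"
  shows "\<eta> \<le> (1 - (\<Sum>i\<in>UNIV. a i)) * received_power h \<eta> P"
proof -
  have "(\<Sum>i\<in>UNIV. a i) * received_power h \<eta> P = (\<Sum>i\<in>UNIV. a i * received_power h \<eta> P)"
    by (simp add: sum_distrib_right)
  also have "\<dots> \<le> (\<Sum>i\<in>UNIV. h i * P i)" using assms by (rule sum_mono)
  also have "\<dots> = received_power h \<eta> P - \<eta>" unfolding received_power_def by simp
  finally show ?thesis by (simp add: algebra_simps)
qed

lemma sum_shares_less_one:
  fixes h a P :: "'u::finite \<Rightarrow> real"
  assumes h: "\<And>j. h j > 0" and \<eta>: "\<eta> > 0" and P: "\<And>j. P j \<ge> 0"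
    and le: "\<And>i. a i * received_power h \<eta> P \<le> h i * P i"
  shows "(\<Sum>i\<in>UNIV. a i) < 1"
proof (rule ccontr)
  assume "\<not> (\<Sum>i\<in>UNIV. a i) < 1"
  moreover have "received_power h \<eta> P \<ge> 0"
    unfolding received_power_def using h P \<eta>
    by (intro add_nonneg_nonneg sum_nonneg) (auto simp: less_imp_le)
  ultimately have "(1 - (\<Sum>i\<in>UNIV. a i)) * received_power h \<eta> P \<le> 0"
    by (simp add: mult_nonpos_nonneg)
  then show False using received_power_lower_bound[OF le] \<eta> by linarith
qed

lemma received_power_min_power_profile:
  fixes h a :: "'u::finite \<Rightarrow> real"
  assumes h: "\<And>j. h j > 0" and A: "(\<Sum>i\<in>UNIV. a i) < 1"
  shows "received_power h \<eta> (min_power_profile h \<eta> a) = \<eta> / (1 - (\<Sum>i\<in>UNIV. a i))"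
proof -
  have "received_power h \<eta> (min_power_profile h \<eta> a)
        = \<eta> + (\<Sum>i\<in>UNIV. a i) * (\<eta> / (1 - (\<Sum>i\<in>UNIV. a i)))"
    unfolding received_power_def min_power_profile_def using h
    by (simp add: sum_distrib_right sum_divide_distrib less_imp_neq[symmetric])
  also have "\<dots> = \<eta> / (1 - (\<Sum>i\<in>UNIV. a i))" using A by (simp add: field_simps)
  finally show ?thesis .
qed

lemma min_power_profile_solves:
  fixes h a :: "'u::finite \<Rightarrow> real"
  assumes h: "\<And>j. h j > 0" and A: "(\<Sum>i\<in>UNIV. a i) < 1"
  shows "h i * min_power_profile h \<eta> a i = a i * received_power h \<eta> (min_power_profile h \<eta> a)"
  unfolding received_power_min_power_profile[where h=h, OF h A]
  unfolding min_power_profile_def using h[of i] by simp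

lemma min_power_profile_le:
  fixes h a P :: "'u::finite \<Rightarrow> real"
  assumes h: "\<And>j. h j > 0" and a: "\<And>j. a j \<ge> 0" and A: "(\<Sum>i\<in>UNIV. a i) < 1"
    and le: "\<And>i. a i * received_power h \<eta> P \<le> h i * P i"
  shows "min_power_profile h \<eta> a i \<le> P i"
proof -
  have "\<eta> / (1 - (\<Sum>i\<in>UNIV. a i)) \<le> received_power h \<eta> P"
    using received_power_lower_bound[OF le] A by (simp add: field_simps)
  then have "a i * (\<eta> / (1 - (\<Sum>i\<in>UNIV. a i))) \<le> h i * P i"
    using mult_left_mono[OF _ a[of i]] le[of i] by (meson order_trans)
  then show ?thesis
    unfolding min_power_profile_def by (simp only: pos_divide_le_eq[OF h[of i]] mult.commute)
qed

lemma eq_min_power_profile: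
  fixes h a P :: "'u::finite \<Rightarrow> real"
  assumes h: "\<And>j. h j > 0" and A: "(\<Sum>i\<in>UNIV. a i) < 1"
    and eq: "\<And>i. h i * P i = a i * received_power h \<eta> P"
  shows "P = min_power_profile h \<eta> a"
proof
  fix i
  have "received_power h \<eta> P = \<eta> + (\<Sum>i\<in>UNIV. h i * P i)"
    by (simp add: received_power_def)
  also have "\<dots> = \<eta> + (\<Sum>i\<in>UNIV. a i) * received_power h \<eta> P"
    by (simp add: eq sum_distrib_right)
  finally have "received_power h \<eta> P = \<eta> / (1 - (\<Sum>i\<in>UNIV. a i))"
    using A by (simp add: field_simps)
  then have "h i * P i = a i * (\<eta> / (1 - (\<Sum>i\<in>UNIV. a i)))" using eq[of i] by simp
  then show "P i = min_power_profile h \<eta> a i"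
    unfolding min_power_profile_def using h[of i] by (metis nonzero_mult_div_cancel_left less_irrefl)
qed

lemma eq_if_le_and_sum_le:
  fixes P Q :: "'u::finite \<Rightarrow> real"
  assumes "\<And>i. Q i \<le> P i" and "(\<Sum>i\<in>UNIV. P i) \<le> (\<Sum>i\<in>UNIV. Q i)"
  shows "P = Q"
proof
  fix i
  have "(\<Sum>i\<in>UNIV. Q i) = (\<Sum>i\<in>UNIV. P i)"
    using assms sum_mono[of UNIV Q P] by (simp add: order_antisym)
  then show "P i = Q i" using sum_mono_inv[of Q UNIV P i] assms(1) by simp
qed

lemma required_share_nonneg: "t \<ge> 0 \<Longrightarrow> required_share t \<ge> 0"
  using powr_mono[of "- t" 0 2] unfolding required_share_def by simp

lemma satisfaction_equilibria_iff:
  fixes h \<theta> Pmax :: "'u::finite \<Rightarrow> real"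
  assumes h: "\<And>j. h j > 0" and \<eta>: "\<eta> > 0"
  shows "P \<in> satisfaction_equilibria h \<eta> \<theta> Pmax \<longleftrightarrow> P \<in> strategy_space Pmax \<and>
           (\<forall>i. required_share (\<theta> i) * received_power h \<eta> P \<le> h i * P i)"
  using rate_threshold_iff(1)[where h=h and \<eta>=\<eta>, OF h \<eta>]
  unfolding satisfaction_equilibria_def strategy_space_def by auto

lemma min_power_profile_least_equilibrium:
  fixes h \<theta> Pmax :: "'u::finite \<Rightarrow> real"
  assumes h: "\<And>j. h j > 0" and \<eta>: "\<eta> > 0" and \<theta>: "\<And>i. \<theta> i > 0"
    and Q: "Q \<in> satisfaction_equilibria h \<eta> \<theta> Pmax"
  defines "a \<equiv> \<lambda>i. required_share (\<theta> i)"
  shows "(\<Sum>i\<in>UNIV. a i) < 1"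
    and "min_power_profile h \<eta> a \<in> satisfaction_equilibria h \<eta> \<theta> Pmax"
    and "\<And>P i. P \<in> satisfaction_equilibria h \<eta> \<theta> Pmax \<Longrightarrow> min_power_profile h \<eta> a i \<le> P i"
proof -
  have SE_iff: "P \<in> satisfaction_equilibria h \<eta> \<theta> Pmax \<longleftrightarrow>
      P \<in> strategy_space Pmax \<and> (\<forall>i. a i * received_power h \<eta> P \<le> h i * P i)" for P
    unfolding a_def by (rule satisfaction_equilibria_iff[where h=h, OF h \<eta>])
  have a: "a i \<ge> 0" for i unfolding a_def using \<theta>[of i] by (simp add: required_share_nonneg)
  show A: "(\<Sum>i\<in>UNIV. a i) < 1"
    using Q sum_shares_less_one[where h=h, OF h \<eta>] unfolding SE_iff strategy_space_def by blast
  show below: "min_power_profile h \<eta> a i \<le> P i" if "P \<in> satisfaction_equilibria h \<eta> \<theta> Pmax" for P i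
    using that min_power_profile_le[where h=h, OF h a A] unfolding SE_iff by blast
  have "0 \<le> min_power_profile h \<eta> a i" for i
    unfolding min_power_profile_def using a[of i] h[of i] A \<eta> by simp
  then have "min_power_profile h \<eta> a \<in> strategy_space Pmax"
    using below[OF Q] Q unfolding SE_iff strategy_space_def by (auto intro: order_trans)
  then show "min_power_profile h \<eta> a \<in> satisfaction_equilibria h \<eta> \<theta> Pmax"
    unfolding SE_iff using min_power_profile_solves[where h=h, OF h A] by simp
qed

lemma rate_eq_iff_eq_min_power_profile:
  fixes h \<theta> P :: "'u::finite \<Rightarrow> real"
  assumes h: "\<And>j. h j > 0" and \<eta>: "\<eta> > 0" and \<theta>: "\<And>i. \<theta> i > 0"
  defines "a \<equiv> \<lambda>i. required_share (\<theta> i)"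
  assumes A: "(\<Sum>i\<in>UNIV. a i) < 1"
  shows "(\<forall>j. P j \<ge> 0) \<and> (\<forall>i. rate h \<eta> i P = \<theta> i) \<longleftrightarrow> P = min_power_profile h \<eta> a"
proof
  assume "(\<forall>j. P j \<ge> 0) \<and> (\<forall>i. rate h \<eta> i P = \<theta> i)"
  then have "h i * P i = a i * received_power h \<eta> P" for i
    using rate_threshold_iff(2)[where h=h and \<eta>=\<eta> and P=P, OF h \<eta>] unfolding a_def by auto
  then show "P = min_power_profile h \<eta> a" by (rule eq_min_power_profile[where h=h, OF h A])
next
  assume P: "P = min_power_profile h \<eta> a"
  have a: "a i \<ge> 0" for i unfolding a_def using \<theta>[of i] by (simp add: required_share_nonneg)
  have "P j \<ge> 0" for j unfolding P min_power_profile_def using a[of j] h[of j] A \<eta> by simp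
  then show "(\<forall>j. P j \<ge> 0) \<and> (\<forall>i. rate h \<eta> i P = \<theta> i)"
    using rate_threshold_iff(2)[where h=h and \<eta>=\<eta> and P=P, OF h \<eta>]
      min_power_profile_solves[where h=h, OF h A] unfolding P a_def by simp
qed

lemma efficient_SE_iff_eq_least:
  assumes least: "Ps \<in> satisfaction_equilibria h \<eta> \<theta> Pmax"
    and below: "\<And>Q i. Q \<in> satisfaction_equilibria h \<eta> \<theta> Pmax \<Longrightarrow> Ps i \<le> Q i"
  shows "efficient_SE h \<eta> \<theta> Pmax P \<longleftrightarrow> P = Ps"
proof
  assume "efficient_SE h \<eta> \<theta> Pmax P"
  then have "P \<in> satisfaction_equilibria h \<eta> \<theta> Pmax" and "sum P UNIV \<le> sum Ps UNIV"
    using least unfolding efficient_SE_def by auto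
  then show "P = Ps" using below eq_if_le_and_sum_le by blast
next
  assume "P = Ps"
  then show "efficient_SE h \<eta> \<theta> Pmax P"
    using least below unfolding efficient_SE_def by (simp add: sum_mono)
qed

theorem proposition2:
  fixes h \<theta> Pmax :: "'u::finite \<Rightarrow> real" and \<eta> :: real
  assumes "\<And>i. h i > 0" and "\<eta> > 0" and "\<And>i. \<theta> i > 0" and "\<And>i. Pmax i > 0"
    and "satisfaction_equilibria h \<eta> \<theta> Pmax \<noteq> {}"
  shows "(\<exists>!P. efficient_SE h \<eta> \<theta> Pmax P) \<and>
         (\<forall>P. efficient_SE h \<eta> \<theta> Pmax P \<longleftrightarrow>
              (P \<in> strategy_space Pmax \<and> (\<forall>i. rate h \<eta> i P = \<theta> i)))"
proof -
  define Ps where "Ps = min_power_profile h \<eta> (\<lambda>i. required_share (\<theta> i))"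
  obtain Q where "Q \<in> satisfaction_equilibria h \<eta> \<theta> Pmax" using assms(5) by blast
  note least = min_power_profile_least_equilibrium[where h=h and \<theta>=\<theta>, OF assms(1-3) this,
      folded Ps_def]
  have efficient_iff: "efficient_SE h \<eta> \<theta> Pmax P \<longleftrightarrow> P = Ps" for P
    using least(2,3) by (rule efficient_SE_iff_eq_least)
  have solution_iff: "P \<in> strategy_space Pmax \<and> (\<forall>i. rate h \<eta> i P = \<theta> i) \<longleftrightarrow> P = Ps" for P
    using rate_eq_iff_eq_min_power_profile[where h=h and \<theta>=\<theta> and P=P, OF assms(1-3) least(1)]
      least(2) unfolding Ps_def[symmetric] satisfaction_equilibria_def strategy_space_def by auto
  show ?thesis by (simp add: efficient_iff solution_iff)
qed

end
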